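(* Let $O_n^{(m)}=\sum_{k=1}^n (2k-1)^{-m}$ and $G=\beta(2)$ (Catalan's constant). Then: (i) $\displaystyle\sum_{n=1}^{\infty}\frac{4^n}{n^2\binom{2n}{n}}=8\beta(1)^2=\frac{\pi^2}{2}$; (ii) $\displaystyle\sum_{n=1}^{\infty}\frac{4^n}{n^2\binom{2n}{n}}O_n^{(2)}=16\beta(1)\beta(3)-8\beta(2)^2=\frac{\pi^4}{8}-8G^2$; (iii) $\displaystyle\sum_{n=1}^{\infty}\frac{4^n}{n^2\binom{2n}{n}}\,\frac{(O_n^{(2)})^2+O_n^{(4)}}{2}=16\beta(1)\beta(5)-16\beta(2)\beta(4)+8\beta(3)^2=\frac{\pi^6}{48}-16G\beta(4)$; (iv) $\displaystyle\sum_{n=1}^{\infty}\frac{4^n}{n^2\binom{2n}{n}}\,\frac{(O_n^{(2)})^3+3O_n^{(2)}O_n^{(4)}+2O_n^{(6)}}{6}=16\beta(1)\beta(7)-16\beta(2)\beta(6)+16\beta(3)\beta(5)-8\beta(4)^2=\frac{17\pi^8}{5760}-16G\beta(6)-8\beta(4)^2$.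
   Context: The Dirichlet beta function is $\beta(m)=\sum_{k=1}^\infty \frac{(-1)^{k-1}}{(2k-1)^m}$ for integers $m\ge1$; known values: $\beta(1)=\pi/4$, $\beta(3)=\pi^3/32$, $\beta(5)=5\pi^5/1536$, $\beta(7)=61\pi^7/184320$. The expressions $1$, $O_n^{(2)}$, $\frac{(O_n^{(2)})^2+O_n^{(4)}}{2}$, $\frac{(O_n^{(2)})^3+3O_n^{(2)}O_n^{(4)}+2O_n^{(6)}}{6}$ equal the multiple $t$-harmonic star sums $t_n^{\star}(\{2\}_j)=\sum_{n\ge k_1\ge\dots\ge k_j\ge 1}\prod_{i=1}^j (2k_i-1)^{-2}$ for $j=0,1,2,3$ respectively. *)

theory Defs
  imports "HOL-Analysis.Analysis"
begin

definition dirichlet_beta :: "nat \<Rightarrow> real" where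
  "dirichlet_beta m = (\<Sum>k. (-1) ^ k / (2 * real k + 1) ^ m)"

definition odd_harm :: "nat \<Rightarrow> nat \<Rightarrow> real" where
  "odd_harm m n = (\<Sum>k=1..n. 1 / (2 * real k - 1) ^ m)"

definition cbw :: "nat \<Rightarrow> real" where
  "cbw n = 4 ^ n / (real n ^ 2 * real ((2 * n) choose n))"

end

theory Submission
  imports Defs "HOL-Computational_Algebra.Polynomial"
begin

text \<open>
  Put \<open>x k = 2 k + 1\<close> and \<open>S n j = \<Sum>k\<le>n. (-1)^k C(2n+1, n-k) / (x k)^(2j+1)\<close>. Comparing
  \<open>S (n+1)\<close> with \<open>S n\<close> termwise gives a recurrence in \<open>n\<close> which matches the recursion of the
  star sums, so \<open>S n j = S n 0 * t*_(n+1)({2}_j)\<close>, and \<open>S n 0\<close> is an explicit central binomial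
  quotient. Thus the \<open>n\<close>-th term of each series is a combination of the numbers
  \<open>(-1)^k / (x k)^(2j+1)\<close> with nonnegative binomial weights, and exchanging the order of summation
  (Tannery) leaves \<open>\<Sum>k. (-1)^k c k / (x k)^(2j+1)\<close> with column sums \<open>c k\<close>. These satisfy
  \<open>c k + c (k+1) = 8/(k+1)\<close> and \<open>c k \<rightarrow> 0\<close>, hence \<open>c k = 16 \<Sum>i. (-1)^i / (x k + x i)\<close>.
  Symmetrising the resulting double series with the partial fraction expansion of
  \<open>1/(a^p (a+b)) + 1/(b^p (a+b))\<close> for odd \<open>p\<close> splits it into products of Dirichlet beta values.
  The values \<open>\<beta>(2m+1)\<close> come from differentiating the reflection formula
  \<open>\<psi>(1-x) - \<psi>(x) = \<pi> cot(\<pi> x)\<close> and evaluating at \<open>x = 1/4\<close>.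
\<close>

lemma Gamma_reflection_real:
  fixes x :: real
  shows "Gamma x * Gamma (1 - x) = pi / sin (pi * x)"
proof -
  have "Gamma (1 - complex_of_real x) = of_real (Gamma (1 - x))"
    by (metis Gamma_complex_of_real of_real_1 of_real_diff)
  then have "complex_of_real (Gamma x * Gamma (1 - x)) = Gamma (of_real x) * Gamma (1 - of_real x)"
    by (simp add: Gamma_complex_of_real)
  also have "\<dots> = of_real (pi / sin (pi * x))"
    by (simp add: Gamma_reflection_complex flip: sin_of_real)
  finally show ?thesis
    by (simp only: of_real_eq_iff)
qed

lemma ln_Gamma_reflection:
  fixes x :: real
  assumes "0 < x" "x < 1"
  shows "ln_Gamma x + ln_Gamma (1 - x) = ln pi - ln (sin (pi * x))"
proof -
  have "sin (pi * x) > 0"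
    using assms by (intro sin_gt_zero) auto
  moreover have "ln_Gamma x + ln_Gamma (1 - x) = ln (Gamma x * Gamma (1 - x))"
  proof -
    have "Gamma x > 0" "Gamma (1 - x) > 0"
      using assms by (auto intro: Gamma_real_pos)
    moreover have "ln_Gamma x = ln (Gamma x)" "ln_Gamma (1 - x) = ln (Gamma (1 - x))"
      using assms by (auto simp: ln_Gamma_real_pos)
    ultimately show ?thesis
      by (simp add: ln_mult)
  qed
  ultimately show ?thesis
    by (simp add: Gamma_reflection_real ln_div)
qed

lemma Digamma_reflection:
  fixes x :: real
  assumes "0 < x" "x < 1"
  shows "Digamma (1 - x) - Digamma x = pi * cot (pi * x)"
proof -
  have sin_pos: "sin (pi * x) > 0"
    using assms by (intro sin_gt_zero) auto
  have "eventually (\<lambda>y. y \<in> {0<..<1}) (nhds x)"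
    using assms by (intro eventually_nhds_in_open) auto
  then have "eventually (\<lambda>y. ln_Gamma y + ln_Gamma (1 - y) = ln pi - ln (sin (pi * y))) (nhds x)"
    by eventually_elim (auto intro: ln_Gamma_reflection)
  moreover have "((\<lambda>y. ln pi - ln (sin (pi * y))) has_real_derivative - (pi * cot (pi * x))) (at x)"
    using sin_pos by (auto intro!: derivative_eq_intros simp: cot_def)
  ultimately have "((\<lambda>y. ln_Gamma y + ln_Gamma (1 - y)) has_real_derivative - (pi * cot (pi * x))) (at x)"
    by (subst DERIV_cong_ev[OF refl _ refl]) auto
  moreover have "((\<lambda>y. ln_Gamma y + ln_Gamma (1 - y)) has_real_derivative Digamma x - Digamma (1 - x)) (at x)"
    using assms by (auto intro!: derivative_eq_intros)
  ultimately show ?thesis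
    using DERIV_unique by fastforce
qed

definition polygamma_refl :: "nat \<Rightarrow> real \<Rightarrow> real" where
  "polygamma_refl n x = (-1) ^ n * Polygamma n (1 - x) - Polygamma n x"

primrec cot_poly :: "nat \<Rightarrow> real poly" where
  "cot_poly 0 = [:0, 1:]"
| "cot_poly (Suc n) = - (pderiv (cot_poly n) * [:1, 0, 1:])"

lemma has_real_derivative_polygamma_refl:
  fixes x :: real
  assumes "0 < x" "x < 1"
  shows "(polygamma_refl n has_real_derivative polygamma_refl (Suc n) x) (at x)"
proof -
  have "x \<notin> \<int>\<^sub>\<le>\<^sub>0" "1 - x \<notin> \<int>\<^sub>\<le>\<^sub>0"
    using assms by (auto elim!: nonpos_Ints_cases)
  then show ?thesis
    unfolding polygamma_refl_def [abs_def] by (auto intro!: derivative_eq_intros)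
qed

lemma has_real_derivative_cot_pi:
  fixes x :: real
  assumes "0 < x" "x < 1"
  shows "((\<lambda>y. cot (pi * y)) has_real_derivative - pi * (1 + cot (pi * x) ^ 2)) (at x)"
proof -
  have "sin (pi * x) > 0"
    using assms by (intro sin_gt_zero) auto
  then have "((\<lambda>y. cot (pi * y)) has_real_derivative - inverse (sin (pi * x) ^ 2) * pi) (at x)"
    by (intro DERIV_chain2[OF DERIV_cot]) (auto intro!: derivative_eq_intros)
  moreover have "inverse (sin (pi * x) ^ 2) = 1 + cot (pi * x) ^ 2"
    using \<open>sin (pi * x) > 0\<close> sin_cos_squared_add[of "pi * x"] by (simp add: cot_def field_simps)
  ultimately show ?thesis
    by (metis mult.commute mult_minus_left)
qed

lemma polygamma_refl_eq_cot_poly: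
  fixes x :: real
  assumes "0 < x" "x < 1"
  shows "polygamma_refl n x = pi ^ Suc n * poly (cot_poly n) (cot (pi * x))"
  using assms
proof (induction n arbitrary: x)
  case 0
  then show ?case
    by (simp add: polygamma_refl_def Digamma_reflection)
next
  case (Suc n)
  let ?g = "\<lambda>y. pi ^ Suc n * poly (cot_poly n) (cot (pi * y))"
  have "eventually (\<lambda>y. y \<in> {0<..<1}) (nhds x)"
    using Suc.prems by (intro eventually_nhds_in_open) auto
  then have "eventually (\<lambda>y. polygamma_refl n y = ?g y) (nhds x)"
    by eventually_elim (use Suc.IH in auto)
  moreover have "(?g has_real_derivative pi ^ Suc (Suc n) * poly (cot_poly (Suc n)) (cot (pi * x))) (at x)"
    using Suc.prems
    by (auto intro!: derivative_eq_intros DERIV_chain2[OF poly_DERIV] has_real_derivative_cot_pi)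
       (simp add: algebra_simps power2_eq_square)
  ultimately have "(polygamma_refl n has_real_derivative
      pi ^ Suc (Suc n) * poly (cot_poly (Suc n)) (cot (pi * x))) (at x)"
    by (subst DERIV_cong_ev[OF refl _ refl]) auto
  with has_real_derivative_polygamma_refl[OF Suc.prems] show ?case
    using DERIV_unique by blast
qed

lemma dirichlet_beta_sums:
  assumes "m > 0"
  shows "(\<lambda>k. (-1) ^ k / (2 * real k + 1) ^ m) sums dirichlet_beta m"
proof -
  have "summable (\<lambda>k. (-1) ^ k * (1 / (2 * real k + 1) ^ m))"
  proof (rule summable_Leibniz')
    show "(\<lambda>k. 1 / (2 * real k + 1) ^ m) \<longlonglongrightarrow> 0"
      using assms by real_asymp
    show "1 / (2 * real (Suc k) + 1) ^ m \<le> 1 / (2 * real k + 1) ^ m" for k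
      by (intro divide_left_mono power_mono) auto
  qed simp
  then show ?thesis
    by (simp add: dirichlet_beta_def summable_sums)
qed

lemma dirichlet_beta_sums_grouped:
  assumes "m > 0"
  shows "(\<lambda>k. 1 / (4 * real k + 1) ^ m - 1 / (4 * real k + 3) ^ m) sums dirichlet_beta m"
proof -
  have "(\<lambda>k. \<Sum>i\<in>{k * 2..<k * 2 + 2}. (-1) ^ i / (2 * real i + 1) ^ m) sums dirichlet_beta m"
    by (rule sums_group[OF dirichlet_beta_sums[OF assms]]) simp
  moreover have "{k * 2..<k * 2 + 2} = {2 * k, Suc (2 * k)}" for k
    by auto
  ultimately show ?thesis
    by (simp add: algebra_simps)
qed

lemma dirichlet_beta_eq_polygamma_refl:
  assumes "even n" "n > 0"
  shows "dirichlet_beta (Suc n) = polygamma_refl n (1/4) / (fact n * 4 ^ Suc n)"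
proof -
  have shift: "inverse ((y / 4) ^ Suc n) / 4 ^ Suc n = 1 / y ^ Suc n" for y :: real
    by (simp add: power_divide)
  have "(\<lambda>k. inverse ((1/4 + real k) ^ Suc n) - inverse ((3/4 + real k) ^ Suc n))
      sums ((-1) ^ Suc n * Polygamma n (1/4 :: real) / fact n - (-1) ^ Suc n * Polygamma n (3/4) / fact n)"
    using assms(2) by (intro sums_diff Polygamma_LIMSEQ) auto
  then have "(\<lambda>k. (inverse ((1/4 + real k) ^ Suc n) - inverse ((3/4 + real k) ^ Suc n)) / 4 ^ Suc n)
      sums (((-1) ^ Suc n * Polygamma n (1/4 :: real) / fact n
             - (-1) ^ Suc n * Polygamma n (3/4) / fact n) / 4 ^ Suc n)"
    by (rule sums_divide)
  also have "\<dots> = polygamma_refl n (1/4) / (fact n * 4 ^ Suc n)"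
    using assms(1) by (simp add: polygamma_refl_def field_simps)
  finally have "(\<lambda>k. (inverse ((1/4 + real k) ^ Suc n) - inverse ((3/4 + real k) ^ Suc n)) / 4 ^ Suc n)
      sums (polygamma_refl n (1/4) / (fact n * 4 ^ Suc n))" .
  moreover have "(inverse ((1/4 + real k) ^ Suc n) - inverse ((3/4 + real k) ^ Suc n)) / 4 ^ Suc n
      = 1 / (4 * real k + 1) ^ Suc n - 1 / (4 * real k + 3) ^ Suc n" for k
    using shift[of "4 * real k + 1"] shift[of "4 * real k + 3"]
    by (simp add: diff_divide_distrib add_divide_distrib add.commute)
  ultimately show ?thesis
    using sums_unique2 dirichlet_beta_sums_grouped[of "Suc n"] by simp
qed

lemma dirichlet_beta_eq_cot_poly:
  assumes "even n" "n > 0"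
  shows "dirichlet_beta (Suc n) = pi ^ Suc n * poly (cot_poly n) 1 / (fact n * 4 ^ Suc n)"
  using assms polygamma_refl_eq_cot_poly[of "1/4" n]
  by (simp add: dirichlet_beta_eq_polygamma_refl cot_def cos_45 sin_45)

lemma dirichlet_beta_1: "dirichlet_beta 1 = pi / 4"
  using pi_series by (simp add: dirichlet_beta_def algebra_simps)

lemma dirichlet_beta_3: "dirichlet_beta 3 = pi ^ 3 / 32"
proof -
  have "poly (cot_poly 2) 1 = 4"
    by (simp add: eval_nat_numeral pderiv_pCons)
  then show ?thesis
    using dirichlet_beta_eq_cot_poly[of 2] by (simp add: fact_numeral)
qed

lemma dirichlet_beta_5: "dirichlet_beta 5 = 5 * pi ^ 5 / 1536"
proof -
  have "poly (cot_poly 4) 1 = 80"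
    by (simp add: eval_nat_numeral pderiv_pCons)
  then show ?thesis
    using dirichlet_beta_eq_cot_poly[of 4] by (simp add: fact_numeral)
qed

lemma dirichlet_beta_7: "dirichlet_beta 7 = 61 * pi ^ 7 / 184320"
proof -
  have "poly (cot_poly 6) 1 = 3904"
    by (simp add: eval_nat_numeral pderiv_pCons)
  then show ?thesis
    using dirichlet_beta_eq_cot_poly[of 6] by (simp add: fact_numeral)
qed

declare binomial_Suc_Suc [simp del]

lemma real_choose_Suc_Suc:
  "real (Suc n choose Suc k) * (real k + 1) = (real n + 1) * real (n choose k)"
proof -
  have "real (Suc n * (n choose k)) = real ((Suc n choose Suc k) * Suc k)"
    by (simp only: Suc_times_binomial_eq)
  then show ?thesis
    by (simp add: algebra_simps)
qed

lemma real_Suc_choose: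
  assumes "k \<le> n"
  shows "real (Suc n choose k) * (real n + 1 - real k) = (real n + 1) * real (n choose k)"
proof -
  have "real (Suc n - k) * real (Suc n choose k) = real (Suc n) * real (n choose k)"
    using binomial_absorb_comp[of "Suc n" k] by (metis diff_Suc_1 of_nat_mult)
  moreover have "real (Suc n - k) = real n + 1 - real k"
    using assms by (simp add: of_nat_diff)
  ultimately show ?thesis
    by (simp add: ac_simps)
qed

lemma real_choose_Suc:
  assumes "k \<le> n"
  shows "real (n choose Suc k) * (real k + 1) = real (n choose k) * (real n - real k)"
proof -
  have "real (Suc k * (n choose Suc k)) = real ((n - k) * (n choose k))"
    using binomial_absorption[of k n] binomial_absorb_comp[of n k] by simp
  then show ?thesis
    using assms by (simp add: of_nat_diff algebra_simps)
qed

definition central_binomial_ratio :: "nat \<Rightarrow> real" where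
  "central_binomial_ratio n = real ((2 * n) choose n) / 4 ^ n"

lemma central_binomial_ratio_pos: "central_binomial_ratio n > 0"
  by (simp add: central_binomial_ratio_def)

lemma central_binomial_ratio_Suc:
  "central_binomial_ratio (Suc n) = central_binomial_ratio n * (2 * real n + 1) / (2 * real n + 2)"
proof -
  define w where "w = real n + 1"
  have "w > 0"
    by (simp add: w_def)
  have "real (Suc (Suc (2 * n)) choose Suc n) * w = 2 * w * real (Suc (2 * n) choose n)"
    using real_choose_Suc_Suc[of "Suc (2 * n)" n] by (simp add: w_def)
  moreover have "real (Suc (2 * n) choose n) * w = (2 * w - 1) * real (2 * n choose n)"
    using real_Suc_choose[of n "2 * n"] by (simp add: w_def algebra_simps)
  ultimately have binom: "real (2 * Suc n choose Suc n) = 2 * (2 * w - 1) / w * real (2 * n choose n)"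
    using \<open>w > 0\<close> by (simp add: field_simps)
  have "2 * real n + 1 = 2 * w - 1" "2 * real n + 2 = 2 * w"
    by (simp_all add: w_def)
  then show ?thesis
    unfolding central_binomial_ratio_def binom using \<open>w > 0\<close>
    by (simp only:) (simp add: field_simps)
qed

lemma central_binomial_ratio_squared_le: "central_binomial_ratio n ^ 2 \<le> 1 / (2 * real n + 1)"
proof (induction n)
  case 0
  then show ?case
    by (simp add: central_binomial_ratio_def)
next
  case (Suc n)
  have "(2 * real n + 1) * (2 * real n + 3) \<le> (2 * real n + 2) ^ 2"
    by (simp add: power2_eq_square algebra_simps)
  then have "(2 * real n + 1) / (2 * real n + 2) ^ 2 \<le> 1 / (2 * real n + 3)"
    by (simp add: divide_simps)
  then have step: "1 / (2 * real n + 1) * ((2 * real n + 1) / (2 * real n + 2)) ^ 2 \<le> 1 / (2 * real n + 3)"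
    by (simp add: power2_eq_square)
  have "central_binomial_ratio (Suc n) ^ 2
      = central_binomial_ratio n ^ 2 * ((2 * real n + 1) / (2 * real n + 2)) ^ 2"
    by (simp add: central_binomial_ratio_Suc power_mult_distrib power_divide)
  also have "\<dots> \<le> 1 / (2 * real n + 1) * ((2 * real n + 1) / (2 * real n + 2)) ^ 2"
    using Suc.IH by (rule mult_right_mono) simp
  finally show ?case
    using step by (simp add: add.commute)
qed

lemma central_binomial_ratio_tendsto_0: "central_binomial_ratio \<longlonglongrightarrow> 0"
proof (rule tendsto_sandwich[OF _ _ tendsto_const])
  show "\<forall>\<^sub>F n in sequentially. 0 \<le> central_binomial_ratio n"
    by (simp add: less_imp_le central_binomial_ratio_pos)
  show "\<forall>\<^sub>F n in sequentially. central_binomial_ratio n \<le> sqrt (1 / (2 * real n + 1))"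
    using central_binomial_ratio_squared_le central_binomial_ratio_pos
    by (intro always_eventually allI real_le_rsqrt)
  show "(\<lambda>n. sqrt (1 / (2 * real n + 1))) \<longlonglongrightarrow> 0"
    by real_asymp
qed

text \<open>\<open>m * first_passage m d\<close> is the probability that a simple random walk first reaches
  level \<open>2 m\<close> at time \<open>2 (m + d)\<close>, so by recurrence these weights sum to \<open>1 / m\<close>.\<close>
definition first_passage :: "nat \<Rightarrow> nat \<Rightarrow> real" where
  "first_passage m d = real ((2 * m + 2 * d) choose d) / (real (m + d) * 4 ^ (m + d))"

lemma first_passage_nonneg: "first_passage m d \<ge> 0"
  by (simp add: first_passage_def)

lemma first_passage_0_left: "first_passage 0 d = central_binomial_ratio d / real d"
  by (simp add: first_passage_def central_binomial_ratio_def)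

lemma first_passage_Suc_left:
  "first_passage (Suc m) d = (real d + 1) / (2 * real m + real d + 2) * first_passage m (Suc d)"
proof -
  define N where "N = 2 * m + 2 * d + 2"
  have "real (N choose Suc d) * (real d + 1) = real (N choose d) * (2 * real m + real d + 2)"
    using real_choose_Suc[of d N] by (simp add: N_def)
  then have "real (N choose d) = (real d + 1) / (2 * real m + real d + 2) * real (N choose Suc d)"
    by (simp add: field_simps)
  moreover have "2 * Suc m + 2 * d = N" "2 * m + 2 * Suc d = N" "Suc m + d = m + Suc d"
    by (simp_all add: N_def)
  ultimately show ?thesis
    unfolding first_passage_def by simp
qed

lemma first_passage_Suc_right:
  assumes "m + d > 0"
  shows "first_passage m (Suc d)
    = real (m + d) * (2 * real (m + d) + 1) / (2 * (real d + 1) * (2 * real m + real d + 1))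
      * first_passage m d"
proof -
  define n where "n = m + d"
  have "n > 0"
    using assms by (simp add: n_def)
  define e where "e = 2 * real m + real d + 1"
  have "e > 0"
    by (simp add: e_def)
  have "real (Suc (Suc (2 * n)) choose Suc d) * (real d + 1)
      = (2 * real n + 2) * real (Suc (2 * n) choose d)"
    using real_choose_Suc_Suc[of "Suc (2 * n)" d] by simp
  then have step1: "real (Suc (Suc (2 * n)) choose Suc d)
      = (2 * real n + 2) / (real d + 1) * real (Suc (2 * n) choose d)"
    by (simp add: field_simps)
  have "real (Suc (2 * n) choose d) * e = (2 * real n + 1) * real (2 * n choose d)"
    using real_Suc_choose[of d "2 * n"] by (simp add: n_def e_def algebra_simps)
  then have step2: "real (Suc (2 * n) choose d) = (2 * real n + 1) / e * real (2 * n choose d)"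
    using \<open>e > 0\<close> by (simp add: field_simps)
  have binom: "real (Suc (Suc (2 * n)) choose Suc d)
      = (2 * real n + 2) * (2 * real n + 1) / ((real d + 1) * e) * real (2 * n choose d)"
    unfolding step1 step2 by simp
  define w where "w = real n + 1"
  define u where "u = real d + 1"
  define q where "q = (4 :: real) ^ n"
  have "w > 0" "u > 0" "q > 0"
    by (simp_all add: w_def u_def q_def)
  have idx: "2 * m + 2 * Suc d = Suc (Suc (2 * n))" "m + Suc d = Suc n" "2 * m + 2 * d = 2 * n"
    "m + d = n" "real (Suc n) = w" "(4 :: real) ^ Suc n = 4 * q" "2 * real n + 2 = 2 * w"
    by (simp_all add: n_def w_def q_def)
  show ?thesis
    unfolding first_passage_def idx binom e_def[symmetric] q_def[symmetric] u_def[symmetric]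
    using \<open>n > 0\<close> \<open>e > 0\<close> \<open>w > 0\<close> \<open>u > 0\<close> \<open>q > 0\<close> by (simp add: field_simps)
qed

lemma first_passage_three_term:
  "(real m + 1) * first_passage (Suc m) d - real m * first_passage m (Suc d)
    = 2 * (real d + 1) * first_passage m (Suc d) - 2 * (real d + 2) * first_passage m (Suc (Suc d))"
proof -
  define F where "F = first_passage m (Suc d)"
  define e where "e = 2 * real m + real d + 2"
  define u where "u = real d + 2"
  have "e > 0" "u > 0"
    by (simp_all add: e_def u_def)
  have left: "first_passage (Suc m) d = (real d + 1) / e * F"
    by (simp add: first_passage_Suc_left e_def F_def)
  have right: "first_passage m (Suc (Suc d))
      = (real m + real d + 1) * (2 * real m + 2 * real d + 3) / (2 * u * e) * F"
    using first_passage_Suc_right[of m "Suc d"] by (simp add: F_def e_def u_def algebra_simps)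
  show ?thesis
    unfolding left right F_def[symmetric] u_def[symmetric] using \<open>e > 0\<close> \<open>u > 0\<close>
    by (simp add: field_simps) (simp add: e_def u_def algebra_simps)
qed

lemma first_passage_partial_sums:
  assumes "m > 0"
  shows "(real m + 1) * (\<Sum>d<D. first_passage (Suc m) d) - real m * (\<Sum>d<Suc D. first_passage m d)
    = - 2 * (real D + 1) * first_passage m (Suc D)"
proof (induction D)
  case 0
  define t where "t = 2 * real m + 1"
  have "t > 0"
    by (simp add: t_def)
  have "first_passage m (Suc 0) = real m * t / (2 * t) * first_passage m 0"
    using first_passage_Suc_right[of m 0] assms by (simp add: t_def)
  then show ?case
    using \<open>t > 0\<close> by simp
next
  case (Suc D)
  then show ?case
    using first_passage_three_term[of m D] by (simp add: algebra_simps)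
qed

lemma first_passage_1_partial_sums:
  "(\<Sum>d<D. first_passage 1 d) = 1 - 2 * central_binomial_ratio (Suc D)"
proof (induction D)
  case 0
  then show ?case
    by (simp add: central_binomial_ratio_def)
next
  case (Suc D)
  define u where "u = real D + 1"
  have "u > 0"
    by (simp add: u_def)
  have "first_passage 1 D = u / (u + 1) * (central_binomial_ratio (Suc D) / u)"
    using first_passage_Suc_left[of 0 D] by (simp add: first_passage_0_left u_def add.commute)
  also have "\<dots> = central_binomial_ratio (Suc D) / (real D + 2)"
    using \<open>u > 0\<close> by (simp add: u_def)
  also have "\<dots> = 2 * central_binomial_ratio (Suc D) - 2 * central_binomial_ratio (Suc (Suc D))"
    by (simp add: central_binomial_ratio_Suc[of "Suc D"] field_simps)
  finally show ?case
    using Suc.IH by simp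
qed

lemma first_passage_Suc_le:
  "2 * (real d + 1) * first_passage m (Suc d) \<le> 2 * central_binomial_ratio (m + Suc d)"
proof -
  define n where "n = m + Suc d"
  have "n > 0" "real d + 1 \<le> real n"
    by (simp_all add: n_def)
  have "first_passage m (Suc d) = real ((2 * n) choose Suc d) / (real n * 4 ^ n)"
    unfolding first_passage_def by (simp add: n_def)
  also have "\<dots> \<le> real ((2 * n) choose n) / (real n * 4 ^ n)"
    using binomial_maximum'[of n "Suc d"] by (intro divide_right_mono) simp_all
  also have "\<dots> = central_binomial_ratio n / real n"
    by (simp add: central_binomial_ratio_def)
  finally have "first_passage m (Suc d) \<le> central_binomial_ratio n / real n" .
  then have "2 * (real d + 1) * first_passage m (Suc d) \<le> 2 * real n * (central_binomial_ratio n / real n)"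
    using \<open>real d + 1 \<le> real n\<close> first_passage_nonneg central_binomial_ratio_pos[of n]
    by (intro mult_mono) auto
  also have "\<dots> = 2 * central_binomial_ratio n"
    using \<open>n > 0\<close> by simp
  finally show ?thesis
    by (simp only: n_def)
qed

lemma first_passage_remainder_tendsto_0:
  "(\<lambda>d. 2 * (real d + 1) * first_passage m (Suc d)) \<longlonglongrightarrow> 0"
proof (rule tendsto_sandwich[OF _ _ tendsto_const])
  show "\<forall>\<^sub>F d in sequentially. 0 \<le> 2 * (real d + 1) * first_passage m (Suc d)"
    by (simp add: first_passage_nonneg)
  show "\<forall>\<^sub>F d in sequentially. 2 * (real d + 1) * first_passage m (Suc d)
      \<le> 2 * central_binomial_ratio (m + Suc d)"
    by (intro always_eventually allI first_passage_Suc_le)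
  have "(\<lambda>d. central_binomial_ratio (d + Suc m)) \<longlonglongrightarrow> 0"
    by (rule LIMSEQ_ignore_initial_segment[OF central_binomial_ratio_tendsto_0])
  then show "(\<lambda>d. 2 * central_binomial_ratio (m + Suc d)) \<longlonglongrightarrow> 0"
    using tendsto_mult_right_zero by (simp add: add.commute)
qed

lemma first_passage_sums:
  assumes "m > 0"
  shows "first_passage m sums (1 / real m)"
  using assms
proof (induction m)
  case 0
  then show ?case
    by simp
next
  case (Suc m)
  show ?case
  proof (cases "m = 0")
    case True
    have "(\<lambda>D. 1 - 2 * central_binomial_ratio (Suc D)) \<longlonglongrightarrow> 1 - 2 * 0"
      by (intro tendsto_intros LIMSEQ_Suc[OF central_binomial_ratio_tendsto_0])
    then show ?thesis
      unfolding sums_def True first_passage_1_partial_sums[symmetric] by simp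
  next
    case False
    then have "m > 0"
      by simp
    have partial: "(\<lambda>D. \<Sum>d<Suc D. first_passage m d) \<longlonglongrightarrow> 1 / real m"
      by (rule LIMSEQ_Suc[OF Suc.IH[OF \<open>m > 0\<close>, unfolded sums_def]])
    have partial_Suc: "(\<Sum>d<D. first_passage (Suc m) d)
        = (real m * (\<Sum>d<Suc D. first_passage m d) - 2 * (real D + 1) * first_passage m (Suc D))
          / (real m + 1)" for D
      using first_passage_partial_sums[OF \<open>m > 0\<close>, of D] by (simp add: field_simps)
    have "(\<lambda>D. \<Sum>d<D. first_passage (Suc m) d) \<longlonglongrightarrow> (real m * (1 / real m) - 0) / (real m + 1)"
      unfolding partial_Suc by (intro tendsto_intros partial first_passage_remainder_tendsto_0) simp
    also have "(real m * (1 / real m) - 0) / (real m + 1) = 1 / real (Suc m)"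
      using \<open>m > 0\<close> by simp
    finally show ?thesis
      unfolding sums_def .
  qed
qed

definition binom_weight :: "nat \<Rightarrow> nat \<Rightarrow> real" where
  "binom_weight k d = 2 * real ((2 * k + 2 * d + 1) choose d) / (real (k + 1 + d) * 4 ^ (k + d))"

lemma binom_weight_nonneg: "binom_weight k d \<ge> 0"
  by (simp add: binom_weight_def)

lemma binom_weight_0: "binom_weight k 0 = 8 * first_passage (Suc k) 0"
  by (simp add: binom_weight_def first_passage_def)

lemma binom_weight_Suc_add:
  "binom_weight k (Suc d) + binom_weight (Suc k) d = 8 * first_passage (Suc k) (Suc d)"
proof -
  define N where "N = 2 * k + 2 * d + 3"
  define w where "w = real (k + d + 2)"
  define q where "q = (4 :: real) ^ (k + d + 1)"
  have "w > 0" "q > 0"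
    by (simp_all add: w_def q_def)
  have idx: "2 * k + 2 * Suc d + 1 = N" "2 * Suc k + 2 * d + 1 = N" "2 * Suc k + 2 * Suc d = Suc N"
    "k + 1 + Suc d = k + d + 2" "Suc k + 1 + d = k + d + 2" "Suc k + Suc d = k + d + 2"
    "k + Suc d = k + d + 1" "Suc k + d = k + d + 1" "(4 :: real) ^ (k + d + 2) = 4 * q"
    by (simp_all add: N_def q_def)
  have pascal: "real (Suc N choose Suc d) = real (N choose d) + real (N choose Suc d)"
    by (simp only: binomial_Suc_Suc of_nat_add)
  show ?thesis
    unfolding binom_weight_def first_passage_def idx pascal w_def[symmetric] q_def[symmetric]
    using \<open>w > 0\<close> \<open>q > 0\<close> by (simp add: field_simps)
qed

lemma summable_binom_weight: "summable (binom_weight k)"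
proof -
  have "summable (\<lambda>d. 8 * first_passage (Suc k) (Suc d))"
    using first_passage_sums[of "Suc k"] by (simp add: sums_iff summable_Suc_iff)
  then have "summable (\<lambda>d. binom_weight k (Suc d))"
  proof (rule summable_comparison_test'[where N = 0])
    show "norm (binom_weight k (Suc d)) \<le> 8 * first_passage (Suc k) (Suc d)" for d
      using binom_weight_Suc_add[of k d] binom_weight_nonneg[of "Suc k" d] binom_weight_nonneg[of k "Suc d"]
      by simp
  qed
  then show ?thesis
    by (simp add: summable_Suc_iff)
qed

definition binom_weight_sum :: "nat \<Rightarrow> real" where
  "binom_weight_sum k = (\<Sum>d. binom_weight k d)"

lemma binom_weight_sum_nonneg: "binom_weight_sum k \<ge> 0"
  unfolding binom_weight_sum_def by (intro suminf_nonneg summable_binom_weight binom_weight_nonneg)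

lemma binom_weight_sum_add_Suc: "binom_weight_sum k + binom_weight_sum (Suc k) = 8 / real (Suc k)"
proof -
  have summable_fp: "summable (first_passage (Suc k))"
    using first_passage_sums sums_summable by blast
  have "binom_weight_sum k + binom_weight_sum (Suc k)
      = binom_weight k 0 + (\<Sum>d. binom_weight k (Suc d) + binom_weight (Suc k) d)"
  proof -
    have "(\<Sum>d. binom_weight k (Suc d)) + (\<Sum>d. binom_weight (Suc k) d)
        = (\<Sum>d. binom_weight k (Suc d) + binom_weight (Suc k) d)"
      using summable_binom_weight by (intro suminf_add) (simp_all add: summable_Suc_iff)
    then show ?thesis
      unfolding binom_weight_sum_def using suminf_split_head[OF summable_binom_weight[of k]] by simp
  qed
  also have "\<dots> = 8 * first_passage (Suc k) 0 + 8 * (\<Sum>d. first_passage (Suc k) (Suc d))"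
    using summable_fp
    by (simp add: binom_weight_0 binom_weight_Suc_add suminf_mult summable_Suc_iff)
  also have "\<dots> = 8 * (\<Sum>d. first_passage (Suc k) d)"
    using suminf_split_head[OF summable_fp] by simp
  also have "\<dots> = 8 / real (Suc k)"
    using first_passage_sums[of "Suc k"] by (simp add: sums_iff)
  finally show ?thesis .
qed

lemma binom_weight_sum_Suc_le: "binom_weight_sum (Suc k) \<le> 8 / real (Suc k)"
  using binom_weight_sum_add_Suc[of k] binom_weight_sum_nonneg[of k] by linarith

lemma binom_weight_sum_tendsto_0: "binom_weight_sum \<longlonglongrightarrow> 0"
proof -
  have "(\<lambda>k. binom_weight_sum (Suc k)) \<longlonglongrightarrow> 0"
  proof (rule tendsto_sandwich[OF _ _ tendsto_const])
    show "\<forall>\<^sub>F k in sequentially. 0 \<le> binom_weight_sum (Suc k)"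
      by (simp add: binom_weight_sum_nonneg)
    show "\<forall>\<^sub>F k in sequentially. binom_weight_sum (Suc k) \<le> 8 / real (Suc k)"
      by (intro always_eventually allI binom_weight_sum_Suc_le)
    show "(\<lambda>k. 8 / real (Suc k)) \<longlonglongrightarrow> 0"
      by real_asymp
  qed
  then show ?thesis
    by (rule LIMSEQ_imp_Suc)
qed

lemma binom_weight_sum_sums_alternating:
  "(\<lambda>i. (-1) ^ i * (8 / real (k + 1 + i))) sums binom_weight_sum k"
proof -
  have partial: "(\<Sum>i<N. (-1) ^ i * (8 / real (k + 1 + i)))
      = binom_weight_sum k - (-1) ^ N * binom_weight_sum (k + N)" for N
  proof (induction N)
    case (Suc N)
    have "binom_weight_sum (k + N) = 8 / real (k + 1 + N) - binom_weight_sum (k + Suc N)"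
      using binom_weight_sum_add_Suc[of "k + N"] by simp
    then have "(-1) ^ N * binom_weight_sum (k + N)
        = (-1) ^ N * (8 / real (k + 1 + N)) - (-1) ^ N * binom_weight_sum (k + Suc N)"
      by (simp only: right_diff_distrib)
    then show ?case
      unfolding sum.lessThan_Suc Suc.IH by simp
  qed simp
  have "(\<lambda>N. (-1) ^ N * binom_weight_sum (k + N)) \<longlonglongrightarrow> 0"
  proof (rule tendsto_norm_zero_cancel)
    have "(\<lambda>N. binom_weight_sum (N + k)) \<longlonglongrightarrow> 0"
      by (rule LIMSEQ_ignore_initial_segment[OF binom_weight_sum_tendsto_0])
    then show "(\<lambda>N. norm ((-1) ^ N * binom_weight_sum (k + N))) \<longlonglongrightarrow> 0"
      by (simp add: abs_mult power_abs abs_of_nonneg binom_weight_sum_nonneg add.commute)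
  qed
  then have "(\<lambda>N. binom_weight_sum k - (-1) ^ N * binom_weight_sum (k + N)) \<longlonglongrightarrow> binom_weight_sum k - 0"
    by (intro tendsto_intros)
  then show ?thesis
    unfolding sums_def partial by simp
qed

definition odd_real :: "nat \<Rightarrow> real" where
  "odd_real k = 2 * real k + 1"

lemma odd_real_pos: "odd_real k > 0"
  by (simp add: odd_real_def)

lemma binom_weight_sum_sums_odd:
  "(\<lambda>i. (-1) ^ i / (odd_real k + odd_real i)) sums (binom_weight_sum k / 16)"
proof -
  have "(-1) ^ i * (8 / real (k + 1 + i)) / 16 = (-1) ^ i / (odd_real k + odd_real i)" for i
  proof -
    define w where "w = real (k + 1 + i)"
    have "w > 0" "odd_real k + odd_real i = 2 * w"
      by (simp_all add: w_def odd_real_def)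
    then show ?thesis
      unfolding w_def[symmetric] by simp
  qed
  moreover have "(\<lambda>i. (-1) ^ i * (8 / real (k + 1 + i)) / 16) sums (binom_weight_sum k / 16)"
    by (intro sums_divide binom_weight_sum_sums_alternating)
  ultimately show ?thesis
    by simp
qed

lemma alternating_binomial_odd_partial_sum:
  assumes "n > 0" "K \<le> n"
  shows "(\<Sum>k\<le>K. (-1) ^ k * real ((2 * n + 1) choose (n - k)) * odd_real k)
    = (-1) ^ K * (real K + 1) * (real n - real K) * real ((2 * n + 1) choose (n - K)) / real n"
  using assms(2)
proof (induction K)
  case 0
  then show ?case
    using assms(1) by (simp add: odd_real_def)
next
  case (Suc K)
  define A where "A = real ((2 * n + 1) choose (n - K))"
  define B where "B = real ((2 * n + 1) choose (n - Suc K))"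
  have "K < n"
    using Suc.prems by simp
  then have "Suc (n - Suc K) = n - K" "real (n - Suc K) + 1 = real n - real K"
    "real (2 * n + 1) - real (n - Suc K) = real n + real K + 2"
    by (simp_all add: of_nat_diff)
  then have rel: "A * (real n - real K) = B * (real n + real K + 2)"
    using real_choose_Suc[of "n - Suc K" "2 * n + 1"] by (simp add: A_def B_def)
  have "(\<Sum>k\<le>Suc K. (-1) ^ k * real ((2 * n + 1) choose (n - k)) * odd_real k)
      = (-1) ^ K * ((real K + 1) * (A * (real n - real K)) / real n - (2 * real K + 3) * B)"
    using Suc \<open>K < n\<close> by (simp add: A_def B_def odd_real_def algebra_simps)
  also have "\<dots> = (-1) ^ Suc K * (real (Suc K) + 1) * (real n - real (Suc K)) * B / real n"
    unfolding rel using assms(1) by (simp add: field_simps)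
  finally show ?case
    by (simp add: B_def)
qed

lemma alternating_binomial_odd_sum:
  assumes "n > 0"
  shows "(\<Sum>k\<le>n. (-1) ^ k * real ((2 * n + 1) choose (n - k)) * odd_real k) = 0"
  using alternating_binomial_odd_partial_sum[OF assms order.refl] by simp

definition alt_binom_sum :: "nat \<Rightarrow> (nat \<Rightarrow> real) \<Rightarrow> real" where
  "alt_binom_sum n w = (\<Sum>k\<le>n. (-1) ^ k * real ((2 * n + 1) choose (n - k)) * w k)"

lemma choose_mult_odd_real_square_diff:
  assumes "k \<le> n"
  shows "real ((2 * Suc n + 1) choose (Suc n - k)) * (odd_real (Suc n) ^ 2 - odd_real k ^ 2)
    = 8 * (real n + 1) * (2 * real n + 3) * real ((2 * n + 1) choose (n - k))"
proof -
  define r where "r = n - k"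
  define A where "A = real (Suc (2 * n + 2) choose Suc r)"
  define B where "B = real ((2 * n + 2) choose r)"
  define C where "C = real ((2 * n + 1) choose r)"
  have "r \<le> n" "k = n - r"
    using assms by (simp_all add: r_def)
  have idx: "2 * Suc n + 1 = Suc (2 * n + 2)" "Suc n - k = Suc r" "n - k = r"
    using assms by (simp_all add: r_def)
  have square_diff: "odd_real (Suc n) ^ 2 - odd_real k ^ 2 = 4 * (real r + 1) * (2 * real n + 2 - real r)"
    using \<open>r \<le> n\<close> \<open>k = n - r\<close> by (simp add: odd_real_def of_nat_diff power2_eq_square algebra_simps)
  have AB: "A * (real r + 1) = (2 * real n + 3) * B"
    using real_choose_Suc_Suc[of "2 * n + 2" r] by (simp add: A_def B_def)
  have BC: "B * (2 * real n + 2 - real r) = (2 * real n + 2) * C"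
    using real_Suc_choose[of r "2 * n + 1"] \<open>r \<le> n\<close> by (simp add: B_def C_def algebra_simps)
  have "A * (4 * (real r + 1) * (2 * real n + 2 - real r))
      = 4 * (A * (real r + 1)) * (2 * real n + 2 - real r)"
    by (simp add: algebra_simps)
  also have "\<dots> = 4 * (2 * real n + 3) * (B * (2 * real n + 2 - real r))"
    unfolding AB by (simp add: algebra_simps)
  also have "\<dots> = 8 * (real n + 1) * (2 * real n + 3) * C"
    unfolding BC by (simp add: algebra_simps)
  finally show ?thesis
    unfolding idx square_diff A_def[symmetric] C_def[symmetric] .
qed

lemma alt_binom_sum_Suc:
  "odd_real (Suc n) ^ 2 * alt_binom_sum (Suc n) w - alt_binom_sum (Suc n) (\<lambda>k. odd_real k ^ 2 * w k)
    = 8 * (real n + 1) * (2 * real n + 3) * alt_binom_sum n w"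
proof -
  have "odd_real (Suc n) ^ 2 * alt_binom_sum (Suc n) w - alt_binom_sum (Suc n) (\<lambda>k. odd_real k ^ 2 * w k)
      = (\<Sum>k\<le>Suc n. (-1) ^ k * (real ((2 * Suc n + 1) choose (Suc n - k))
          * (odd_real (Suc n) ^ 2 - odd_real k ^ 2)) * w k)"
    unfolding alt_binom_sum_def sum_distrib_left sum_subtractf[symmetric]
    by (intro sum.cong refl) (simp add: algebra_simps)
  also have "\<dots> = (\<Sum>k\<le>n. (-1) ^ k * (real ((2 * Suc n + 1) choose (Suc n - k))
      * (odd_real (Suc n) ^ 2 - odd_real k ^ 2)) * w k)"
    by (simp add: sum.atMost_Suc del: mult_Suc_right)
  also have "\<dots> = (\<Sum>k\<le>n. (-1) ^ k
      * (8 * (real n + 1) * (2 * real n + 3) * real ((2 * n + 1) choose (n - k))) * w k)"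
    by (intro sum.cong refl) (simp only: choose_mult_odd_real_square_diff atMost_iff)
  also have "\<dots> = 8 * (real n + 1) * (2 * real n + 3) * alt_binom_sum n w"
    unfolding alt_binom_sum_def sum_distrib_left by (intro sum.cong refl) (simp add: algebra_simps)
  finally show ?thesis .
qed

definition alt_odd_power_sum :: "nat \<Rightarrow> nat \<Rightarrow> real" where
  "alt_odd_power_sum n j = alt_binom_sum n (\<lambda>k. 1 / odd_real k ^ (2 * j + 1))"

lemma alt_odd_power_sum_0_left: "alt_odd_power_sum 0 j = 1"
  by (simp add: alt_odd_power_sum_def alt_binom_sum_def odd_real_def)

lemma alt_odd_power_sum_Suc_0:
  "odd_real (Suc n) ^ 2 * alt_odd_power_sum (Suc n) 0
    = 8 * (real n + 1) * (2 * real n + 3) * alt_odd_power_sum n 0"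
proof -
  have "alt_binom_sum (Suc n) (\<lambda>k. odd_real k ^ 2 * (1 / odd_real k ^ 1)) = alt_binom_sum (Suc n) odd_real"
    unfolding alt_binom_sum_def using odd_real_pos
    by (intro sum.cong refl) (simp add: power2_eq_square)
  also have "\<dots> = 0"
    using alternating_binomial_odd_sum[of "Suc n"] by (simp add: alt_binom_sum_def)
  finally show ?thesis
    using alt_binom_sum_Suc[of n "\<lambda>k. 1 / odd_real k ^ 1"] by (simp add: alt_odd_power_sum_def)
qed

lemma alt_odd_power_sum_Suc_Suc:
  "odd_real (Suc n) ^ 2 * alt_odd_power_sum (Suc n) (Suc j) - alt_odd_power_sum (Suc n) j
    = 8 * (real n + 1) * (2 * real n + 3) * alt_odd_power_sum n (Suc j)"
proof -
  have "odd_real k ^ 2 * (1 / odd_real k ^ (2 * Suc j + 1)) = 1 / odd_real k ^ (2 * j + 1)" for k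
    using odd_real_pos[of k] by (simp add: power_add power2_eq_square field_simps)
  then show ?thesis
    using alt_binom_sum_Suc[of n "\<lambda>k. 1 / odd_real k ^ (2 * Suc j + 1)"]
    by (simp add: alt_odd_power_sum_def)
qed

lemma alt_odd_power_sum_0_eq:
  "alt_odd_power_sum n 0 = 4 ^ n / (2 * (real n + 1) * central_binomial_ratio (Suc n))"
proof (induction n)
  case 0
  then show ?case
    by (simp add: alt_odd_power_sum_0_left central_binomial_ratio_def)
next
  case (Suc n)
  define x where "x = 2 * real n + 3"
  define c where "c = central_binomial_ratio (Suc n)"
  define w where "w = real n + 1"
  have "x > 0" "c > 0" "w > 0"
    by (simp_all add: x_def c_def w_def central_binomial_ratio_pos)
  have "odd_real (Suc n) = x"
    by (simp add: odd_real_def x_def)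
  then have "x ^ 2 * alt_odd_power_sum (Suc n) 0 = 8 * w * x * alt_odd_power_sum n 0"
    using alt_odd_power_sum_Suc_0[of n] by (simp add: x_def w_def)
  then have "alt_odd_power_sum (Suc n) 0 = 8 * w * alt_odd_power_sum n 0 / x"
    using \<open>x > 0\<close> by (simp add: field_simps power2_eq_square)
  also have "\<dots> = 4 * 4 ^ n / (x * c)"
    unfolding Suc.IH c_def[symmetric] w_def[symmetric] using \<open>c > 0\<close> \<open>w > 0\<close> by (simp add: field_simps)
  also have "\<dots> = 4 ^ Suc n / (2 * (real (Suc n) + 1) * central_binomial_ratio (Suc (Suc n)))"
  proof -
    have "central_binomial_ratio (Suc (Suc n)) = c * x / (2 * (w + 1))"
      unfolding c_def central_binomial_ratio_Suc[of "Suc n"] by (simp add: x_def w_def algebra_simps)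
    moreover have "real (Suc n) + 1 = w + 1"
      by (simp add: w_def)
    ultimately show ?thesis
      using \<open>x > 0\<close> \<open>c > 0\<close> \<open>w > 0\<close> by (simp add: field_simps)
  qed
  finally show ?case .
qed

primrec t_star_sum :: "nat \<Rightarrow> nat \<Rightarrow> real" where
  "t_star_sum 0 n = 1"
| "t_star_sum (Suc j) n = (\<Sum>k=1..n. t_star_sum j k / (2 * real k - 1) ^ 2)"

lemma t_star_sum_Suc_Suc:
  "t_star_sum (Suc j) (Suc n) = t_star_sum (Suc j) n + t_star_sum j (Suc n) / odd_real n ^ 2"
  by (simp add: odd_real_def algebra_simps)

lemma t_star_sum_1_right: "t_star_sum j (Suc 0) = 1"
  by (induction j) simp_all

lemma alt_odd_power_sum_eq_t_star_sum:
  "alt_odd_power_sum n j = alt_odd_power_sum n 0 * t_star_sum j (Suc n)"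
proof (induction j arbitrary: n)
  case 0
  then show ?case
    by simp
next
  case (Suc j)
  note IH_depth = Suc.IH
  show ?case
  proof (induction n)
    case 0
    then show ?case
      by (simp add: alt_odd_power_sum_0_left t_star_sum_1_right)
  next
    case (Suc n)
    define x where "x = odd_real (Suc n)"
    define c where "c = 8 * (real n + 1) * (2 * real n + 3)"
    have "x > 0"
      by (simp add: x_def odd_real_pos)
    have "x ^ 2 * alt_odd_power_sum (Suc n) (Suc j)
        = c * alt_odd_power_sum n (Suc j) + alt_odd_power_sum (Suc n) j"
      using alt_odd_power_sum_Suc_Suc[of n j] by (simp add: x_def c_def)
    also have "\<dots> = c * alt_odd_power_sum n 0 * t_star_sum (Suc j) (Suc n)
        + alt_odd_power_sum (Suc n) 0 * t_star_sum j (Suc (Suc n))"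
      by (simp only: Suc.IH IH_depth mult.assoc)
    also have "\<dots> = x ^ 2 * alt_odd_power_sum (Suc n) 0 * t_star_sum (Suc j) (Suc n)
        + alt_odd_power_sum (Suc n) 0 * t_star_sum j (Suc (Suc n))"
      using alt_odd_power_sum_Suc_0[of n] by (simp add: x_def c_def)
    also have "\<dots> = x ^ 2 * (alt_odd_power_sum (Suc n) 0 * t_star_sum (Suc j) (Suc (Suc n)))"
      unfolding t_star_sum_Suc_Suc[of j "Suc n"] x_def[symmetric] using \<open>x > 0\<close>
      by (simp add: field_simps)
    finally show ?case
      using \<open>x > 0\<close> by simp
  qed
qed

lemma odd_harm_Suc: "odd_harm m (Suc n) = odd_harm m n + 1 / odd_real n ^ m"
  by (simp add: odd_harm_def odd_real_def algebra_simps)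

lemma t_star_sum_1: "t_star_sum 1 n = odd_harm 2 n"
  by (simp add: odd_harm_def)

lemma t_star_sum_2: "t_star_sum 2 n = (odd_harm 2 n ^ 2 + odd_harm 4 n) / 2"
proof (induction n)
  case 0
  then show ?case
    by (simp add: odd_harm_def numeral_2_eq_2)
next
  case (Suc n)
  have step: "t_star_sum 2 (Suc n) = t_star_sum 2 n + t_star_sum 1 (Suc n) / odd_real n ^ 2"
    using t_star_sum_Suc_Suc[of 1 n] by (simp only: Suc_1)
  show ?case
    unfolding step Suc.IH t_star_sum_1 odd_harm_Suc using odd_real_pos[of n]
    by (simp add: field_simps eval_nat_numeral)
qed

lemma t_star_sum_3:
  "t_star_sum 3 n = (odd_harm 2 n ^ 3 + 3 * odd_harm 2 n * odd_harm 4 n + 2 * odd_harm 6 n) / 6"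
proof (induction n)
  case 0
  then show ?case
    by (simp add: odd_harm_def numeral_3_eq_3)
next
  case (Suc n)
  have step: "t_star_sum 3 (Suc n) = t_star_sum 3 n + t_star_sum 2 (Suc n) / odd_real n ^ 2"
    using t_star_sum_Suc_Suc[of 2 n] by (simp only: numeral_3_eq_3 numeral_2_eq_2)
  show ?case
    unfolding step Suc.IH t_star_sum_2 odd_harm_Suc using odd_real_pos[of n]
    by (simp add: field_simps eval_nat_numeral)
qed

lemma cbw_mult_t_star_sum:
  "cbw (Suc n) * t_star_sum j (Suc n)
    = (\<Sum>k\<le>n. binom_weight k (n - k) * ((-1) ^ k / odd_real k ^ (2 * j + 1)))"
proof -
  have cbw: "cbw (Suc n) = 2 * alt_odd_power_sum n 0 / ((real n + 1) * 4 ^ n)"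
  proof -
    define c where "c = central_binomial_ratio (Suc n)"
    define w where "w = real n + 1"
    have "c > 0" "w > 0"
      by (simp_all add: c_def w_def central_binomial_ratio_pos)
    have "cbw (Suc n) = 1 / (w ^ 2 * c)"
      by (simp add: cbw_def c_def w_def central_binomial_ratio_def field_simps)
    then show ?thesis
      unfolding alt_odd_power_sum_0_eq c_def[symmetric] w_def[symmetric] using \<open>c > 0\<close> \<open>w > 0\<close>
      by (simp add: field_simps power2_eq_square)
  qed
  have weight: "binom_weight k (n - k) = 2 * real ((2 * n + 1) choose (n - k)) / ((real n + 1) * 4 ^ n)"
    if "k \<le> n" for k
  proof -
    have idx: "2 * k + 2 * (n - k) + 1 = 2 * n + 1" "k + 1 + (n - k) = n + 1" "k + (n - k) = n"
      using that by simp_all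
    show ?thesis
      unfolding binom_weight_def idx by simp
  qed
  have "cbw (Suc n) * t_star_sum j (Suc n) = 2 * alt_odd_power_sum n j / ((real n + 1) * 4 ^ n)"
    unfolding cbw alt_odd_power_sum_eq_t_star_sum[of n j] by simp
  also have "\<dots> = (\<Sum>k\<le>n. binom_weight k (n - k) * ((-1) ^ k / odd_real k ^ (2 * j + 1)))"
    unfolding alt_odd_power_sum_def alt_binom_sum_def sum_divide_distrib sum_distrib_left
    by (intro sum.cong refl) (simp add: weight mult_ac)
  finally show ?thesis .
qed

lemma tendsto_sum_lessThan_Tannery:
  fixes a :: "nat \<Rightarrow> nat \<Rightarrow> real"
  assumes "\<And>k. (\<lambda>N. a k N) \<longlonglongrightarrow> b k"
    and "\<And>k N. \<bar>a k N\<bar> \<le> M k" and "summable M"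
    and "\<And>k N. N \<le> k \<Longrightarrow> a k N = 0"
  shows "(\<lambda>N. \<Sum>k<N. a k N) \<longlonglongrightarrow> (\<Sum>k. b k)"
proof -
  have "(\<lambda>N. \<Sum>k. a k N) \<longlonglongrightarrow> (\<Sum>k. b k)"
    using assms(1-3)
    by (intro tannerys_theorem[THEN conjunct2, THEN conjunct2]) (auto intro!: always_eventually)
  moreover have "(\<Sum>k. a k N) = (\<Sum>k<N. a k N)" for N
    by (rule suminf_finite) (auto simp: assms(4))
  ultimately show ?thesis
    by simp
qed

lemma sum_triangle_reindex:
  fixes f :: "nat \<Rightarrow> nat \<Rightarrow> 'a :: comm_monoid_add" and N :: nat
  shows "(\<Sum>n<N. \<Sum>k\<le>n. f k (n - k)) = (\<Sum>k<N. \<Sum>d<N - k. f k d)"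
proof -
  have "{(k, d). k + d < N} = Sigma {..<N} (\<lambda>k. {..<N - k})"
    by auto
  then show ?thesis
    using sum.triangle_reindex[of f N] by (simp add: sum.Sigma)
qed

lemma sums_antidiagonal_nonneg:
  fixes v :: "nat \<Rightarrow> nat \<Rightarrow> real"
  assumes sums: "\<And>k. v k sums c k" and nonneg: "\<And>k d. v k d \<ge> 0"
    and summable: "summable (\<lambda>k. \<bar>s k\<bar> * c k)"
  shows "(\<lambda>n. \<Sum>k\<le>n. v k (n - k) * s k) sums (\<Sum>k. s k * c k)"
proof -
  define a where "a k N = (if k < N then s k * (\<Sum>d<N - k. v k d) else 0)" for k N
  have "(\<lambda>N. \<Sum>k<N. a k N) \<longlonglongrightarrow> (\<Sum>k. s k * c k)"
  proof (rule tendsto_sum_lessThan_Tannery)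
    show "(\<lambda>N. a k N) \<longlonglongrightarrow> s k * c k" for k
    proof (rule LIMSEQ_offset[where k = k])
      have "(\<lambda>N. s k * (\<Sum>d<N. v k d)) \<longlonglongrightarrow> s k * c k"
        using sums[of k] by (intro tendsto_intros) (simp add: sums_def)
      moreover have "eventually (\<lambda>N. s k * (\<Sum>d<N. v k d) = a k (N + k)) sequentially"
        using eventually_gt_at_top[of 0] by eventually_elim (simp add: a_def)
      ultimately show "(\<lambda>N. a k (N + k)) \<longlonglongrightarrow> s k * c k"
        by (rule Lim_transform_eventually)
    qed
    show "\<bar>a k N\<bar> \<le> \<bar>s k\<bar> * c k" for k N
    proof -
      have "(\<Sum>d<N - k. v k d) \<le> c k"
        using sum_le_suminf[of "v k" "{..<N - k}"] nonneg sums[of k] by (simp add: sums_iff)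
      moreover have "0 \<le> (\<Sum>d<N - k. v k d)"
        using nonneg by (simp add: sum_nonneg)
      ultimately show ?thesis
        by (auto simp: a_def abs_mult intro: mult_left_mono)
    qed
  qed (use summable in \<open>auto simp: a_def\<close>)
  moreover have "(\<Sum>k<N. a k N) = (\<Sum>n<N. \<Sum>k\<le>n. v k (n - k) * s k)" for N
    using sum_triangle_reindex[of "\<lambda>k d. s k * v k d" N]
    by (simp add: a_def sum_distrib_left mult.commute)
  ultimately show ?thesis
    by (simp add: sums_def)
qed

lemma odd_real_power_ge:
  assumes "p > 0"
  shows "real k + 1 \<le> odd_real k ^ p"
proof -
  have "real k + 1 \<le> odd_real k"
    by (simp add: odd_real_def)
  also have "\<dots> \<le> odd_real k ^ p"
    using assms by (intro self_le_power) (auto simp: odd_real_def)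
  finally show ?thesis .
qed

lemma summable_inverse_Suc_squared: "summable (\<lambda>k. 1 / (real k + 1) ^ 2)"
proof -
  have "summable (\<lambda>k. inverse (real (Suc k)) ^ 2)"
    using inverse_power_summable[of 2] by (subst summable_Suc_iff) (simp add: power_inverse)
  then show ?thesis
    by (simp add: inverse_eq_divide add.commute power_one_over)
qed

lemma summable_binom_weight_sum_div_odd_power:
  assumes "p > 0"
  shows "summable (\<lambda>k. binom_weight_sum k / odd_real k ^ p)"
proof -
  have "summable (\<lambda>k. binom_weight_sum (Suc k) / odd_real (Suc k) ^ p)"
  proof (rule summable_comparison_test'[where N = 0])
    show "summable (\<lambda>k. 8 * (1 / (real k + 1) ^ 2))"
      by (intro summable_mult summable_inverse_Suc_squared)
    fix k :: nat
    have "binom_weight_sum (Suc k) \<le> 8 / (real k + 1)"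
      using binom_weight_sum_Suc_le[of k] by (simp add: add.commute)
    moreover have "real k + 1 \<le> odd_real (Suc k) ^ p"
      using odd_real_power_ge[OF assms, of "Suc k"] by simp
    ultimately have "binom_weight_sum (Suc k) / odd_real (Suc k) ^ p \<le> (8 / (real k + 1)) / (real k + 1)"
      by (intro frac_le binom_weight_sum_nonneg) auto
    then show "norm (binom_weight_sum (Suc k) / odd_real (Suc k) ^ p) \<le> 8 * (1 / (real k + 1) ^ 2)"
      using binom_weight_sum_nonneg[of "Suc k"] odd_real_pos[of "Suc k"]
      by (simp add: power2_eq_square)
  qed
  then show ?thesis
    by (rule summable_Suc_iff[THEN iffD1])
qed

lemma cbw_mult_t_star_sum_sums:
  "(\<lambda>n. cbw (n + 1) * t_star_sum j (n + 1))
    sums (\<Sum>k. (-1) ^ k / odd_real k ^ (2 * j + 1) * binom_weight_sum k)"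
proof -
  have sums: "binom_weight k sums binom_weight_sum k" for k
    by (simp add: binom_weight_sum_def summable_sums summable_binom_weight)
  have "\<bar>(-1) ^ k / odd_real k ^ (2 * j + 1)\<bar> * binom_weight_sum k
      = binom_weight_sum k / odd_real k ^ (2 * j + 1)" for k
    using odd_real_pos[of k] by (simp add: abs_divide power_abs abs_of_pos)
  then have "summable (\<lambda>k. \<bar>(-1) ^ k / odd_real k ^ (2 * j + 1)\<bar> * binom_weight_sum k)"
    using summable_binom_weight_sum_div_odd_power[of "2 * j + 1"] by (simp only:)
  from sums_antidiagonal_nonneg[OF sums binom_weight_nonneg this] show ?thesis
    by (simp only: Suc_eq_plus1[symmetric] cbw_mult_t_star_sum)
qed

lemma alternating_partial_sum_bounds:
  fixes a :: "nat \<Rightarrow> real"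
  assumes "\<And>n. a (Suc n) \<le> a n" "\<And>n. 0 \<le> a n"
  shows "0 \<le> (\<Sum>i<N. (-1) ^ i * a i) \<and> (\<Sum>i<N. (-1) ^ i * a i) \<le> a 0"
  using assms
proof (induction N arbitrary: a)
  case 0
  then show ?case
    by simp
next
  case (Suc N)
  have "0 \<le> (\<Sum>i<N. (-1) ^ i * a (Suc i)) \<and> (\<Sum>i<N. (-1) ^ i * a (Suc i)) \<le> a (Suc 0)"
    by (rule Suc.IH) (use Suc.prems in auto)
  moreover have "(\<Sum>i<Suc N. (-1) ^ i * a i) = a 0 - (\<Sum>i<N. (-1) ^ i * a (Suc i))"
    unfolding sum.lessThan_Suc_shift by (simp add: sum_negf[symmetric])
  ultimately show ?case
    using Suc.prems(1)[of 0] by simp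
qed

lemma abs_sum_alternating_odd_real_le:
  "\<bar>\<Sum>i<N. (-1) ^ i / (odd_real k + odd_real i)\<bar> \<le> 1 / (real k + 1)"
proof -
  have "0 \<le> (\<Sum>i<N. (-1) ^ i * (1 / (odd_real k + odd_real i)))
      \<and> (\<Sum>i<N. (-1) ^ i * (1 / (odd_real k + odd_real i))) \<le> 1 / (odd_real k + odd_real 0)"
    using odd_real_pos[of k] odd_real_pos
    by (intro alternating_partial_sum_bounds frac_le) (auto simp: odd_real_def)
  moreover have "1 / (odd_real k + odd_real 0) \<le> 1 / (real k + 1)"
    by (intro divide_left_mono) (auto simp: odd_real_def)
  ultimately show ?thesis
    by simp
qed

lemma summable_alternating_binom_weight_sum:
  assumes "p > 0"
  shows "summable (\<lambda>k. (-1) ^ k / odd_real k ^ p * binom_weight_sum k)"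
  using summable_binom_weight_sum_div_odd_power[OF assms]
proof (rule summable_comparison_test'[where N = 0])
  show "norm ((-1) ^ k / odd_real k ^ p * binom_weight_sum k) \<le> binom_weight_sum k / odd_real k ^ p" for k
    using binom_weight_sum_nonneg[of k] odd_real_pos[of k]
    by (simp add: abs_mult abs_divide power_abs abs_of_pos)
qed

definition alt_square_sum :: "nat \<Rightarrow> nat \<Rightarrow> real" where
  "alt_square_sum p N
    = (\<Sum>k<N. (-1) ^ k / odd_real k ^ p * (\<Sum>i<N. (-1) ^ i / (odd_real k + odd_real i)))"

lemma alt_square_sum_tendsto:
  assumes "p > 0"
  shows "alt_square_sum p \<longlonglongrightarrow> (\<Sum>k. (-1) ^ k / odd_real k ^ p * binom_weight_sum k) / 16"
proof -
  define s where "s k = (-1) ^ k / odd_real k ^ p" for k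
  define a where "a k N = (if k < N then s k * (\<Sum>i<N. (-1) ^ i / (odd_real k + odd_real i)) else 0)"
    for k N
  have lim: "(\<lambda>N. \<Sum>k<N. a k N) \<longlonglongrightarrow> (\<Sum>k. s k * (binom_weight_sum k / 16))"
  proof (rule tendsto_sum_lessThan_Tannery)
    show "(\<lambda>N. a k N) \<longlonglongrightarrow> s k * (binom_weight_sum k / 16)" for k
    proof -
      have "(\<lambda>N. s k * (\<Sum>i<N. (-1) ^ i / (odd_real k + odd_real i))) \<longlonglongrightarrow> s k * (binom_weight_sum k / 16)"
        using binom_weight_sum_sums_odd[of k] unfolding sums_def by (intro tendsto_intros)
      moreover have "eventually (\<lambda>N. s k * (\<Sum>i<N. (-1) ^ i / (odd_real k + odd_real i)) = a k N) sequentially"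
        using eventually_gt_at_top[of k] by eventually_elim (simp add: a_def)
      ultimately show ?thesis
        by (rule Lim_transform_eventually)
    qed
    show "\<bar>a k N\<bar> \<le> 1 / (real k + 1) ^ 2" for k N
    proof -
      have "\<bar>\<Sum>i<N. (-1) ^ i / (odd_real k + odd_real i)\<bar> \<le> 1 / (real k + 1)"
        by (rule abs_sum_alternating_odd_real_le)
      moreover have "\<bar>s k\<bar> \<le> 1 / (real k + 1)"
        using odd_real_power_ge[OF assms, of k] odd_real_pos[of k]
        by (simp add: s_def abs_divide power_abs abs_of_pos divide_left_mono)
      ultimately have "\<bar>s k\<bar> * \<bar>\<Sum>i<N. (-1) ^ i / (odd_real k + odd_real i)\<bar>
          \<le> 1 / (real k + 1) * (1 / (real k + 1))"
        by (intro mult_mono) auto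
      then show ?thesis
        by (simp add: a_def abs_mult power2_eq_square)
    qed
  qed (use summable_inverse_Suc_squared in \<open>auto simp: a_def\<close>)
  have partial: "(\<lambda>N. \<Sum>k<N. a k N) = alt_square_sum p"
    by (simp add: fun_eq_iff a_def alt_square_sum_def s_def)
  have limit: "(\<Sum>k. s k * (binom_weight_sum k / 16)) = (\<Sum>k. s k * binom_weight_sum k) / 16"
    using summable_alternating_binom_weight_sum[OF assms] by (simp add: s_def suminf_divide[symmetric])
  show ?thesis
    using lim[unfolded partial limit] unfolding s_def .
qed

lemma odd_partial_fraction:
  fixes x y :: real
  assumes "odd p" "x > 0" "y > 0"
  shows "1 / (x ^ p * (x + y)) + 1 / (y ^ p * (x + y)) = (\<Sum>r<p. (-1) ^ r / (x ^ (p - r) * y ^ (r + 1)))"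
proof -
  define v where "v r = (-1) ^ r / (x ^ (p - r) * y ^ r * (x + y))" for r
  have "(-1) ^ r / (x ^ (p - r) * y ^ (r + 1)) = v r - v (Suc r)" if "r < p" for r
  proof -
    define A where "A = x ^ (p - Suc r)"
    define B where "B = y ^ r"
    define z where "z = x + y"
    have "A > 0" "B > 0" "z > 0"
      using assms(2,3) by (simp_all add: A_def B_def z_def)
    have "x ^ (p - r) = x * A" "x ^ (p - Suc r) = A" "y ^ (r + 1) = y * B" "y ^ Suc r = y * B" "y ^ r = B"
      using that by (simp_all add: A_def B_def Suc_diff_Suc[symmetric])
    then show ?thesis
      unfolding v_def z_def[symmetric] using \<open>A > 0\<close> \<open>B > 0\<close> \<open>z > 0\<close> assms(2,3)
      by (simp add: field_simps) (simp add: z_def algebra_simps)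
  qed
  then have "(\<Sum>r<p. (-1) ^ r / (x ^ (p - r) * y ^ (r + 1))) = (\<Sum>r<p. v r - v (Suc r))"
    by (intro sum.cong) auto
  also have "\<dots> = v 0 - v p"
    by (rule sum_lessThan_telescope')
  also have "\<dots> = 1 / (x ^ p * (x + y)) + 1 / (y ^ p * (x + y))"
    using assms(1) by (simp add: v_def)
  finally show ?thesis ..
qed

lemma alt_square_sum_symmetrize:
  assumes "odd p"
  shows "2 * alt_square_sum p N = (\<Sum>r<p. (-1) ^ r
    * ((\<Sum>k<N. (-1) ^ k / odd_real k ^ (p - r)) * (\<Sum>k<N. (-1) ^ k / odd_real k ^ (r + 1))))"
proof -
  define x where "x = odd_real"
  have x_pos: "x k > 0" for k
    by (simp add: x_def odd_real_pos)
  have left: "alt_square_sum p N = (\<Sum>k<N. \<Sum>i<N. (-1) ^ k * (-1) ^ i * (1 / (x k ^ p * (x k + x i))))"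
    unfolding alt_square_sum_def x_def[symmetric] sum_distrib_left by (intro sum.cong refl) simp
  have right: "alt_square_sum p N = (\<Sum>k<N. \<Sum>i<N. (-1) ^ k * (-1) ^ i * (1 / (x i ^ p * (x k + x i))))"
    unfolding left by (subst sum.swap) (simp add: add.commute mult.commute)
  have "2 * alt_square_sum p N = (\<Sum>k<N. \<Sum>i<N. (-1) ^ k * (-1) ^ i
      * (1 / (x k ^ p * (x k + x i)) + 1 / (x i ^ p * (x k + x i))))"
    unfolding mult_2 by (subst (1) left, subst right) (simp add: sum.distrib[symmetric] algebra_simps)
  also have "\<dots> = (\<Sum>k<N. \<Sum>i<N. \<Sum>r<p. (-1) ^ r * ((-1) ^ k / x k ^ (p - r) * ((-1) ^ i / x i ^ (r + 1))))"
    unfolding odd_partial_fraction[OF assms x_pos x_pos] sum_distrib_left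
    by (intro sum.cong refl) (simp add: field_simps)
  also have "\<dots> = (\<Sum>k<N. \<Sum>r<p. \<Sum>i<N. (-1) ^ r * ((-1) ^ k / x k ^ (p - r) * ((-1) ^ i / x i ^ (r + 1))))"
    by (rule sum.cong[OF refl]) (rule sum.swap)
  also have "\<dots> = (\<Sum>r<p. \<Sum>k<N. \<Sum>i<N. (-1) ^ r * ((-1) ^ k / x k ^ (p - r) * ((-1) ^ i / x i ^ (r + 1))))"
    by (rule sum.swap)
  also have "\<dots> = (\<Sum>r<p. (-1) ^ r
      * ((\<Sum>k<N. (-1) ^ k / x k ^ (p - r)) * (\<Sum>k<N. (-1) ^ k / x k ^ (r + 1))))"
    unfolding sum_product by (simp only: sum_distrib_left)
  finally show ?thesis
    by (simp only: x_def)
qed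

lemma suminf_binom_weight_sum_eq_dirichlet_beta:
  assumes "odd p"
  shows "(\<Sum>k. (-1) ^ k / odd_real k ^ p * binom_weight_sum k)
    = 8 * (\<Sum>r<p. (-1) ^ r * (dirichlet_beta (p - r) * dirichlet_beta (r + 1)))"
proof -
  have "p > 0"
    using assms by (rule odd_pos)
  have partial_beta: "(\<lambda>N. \<Sum>k<N. (-1) ^ k / odd_real k ^ m) \<longlonglongrightarrow> dirichlet_beta m" if "m > 0" for m
    using dirichlet_beta_sums[OF that] by (simp add: sums_def odd_real_def)
  have "(\<lambda>N. 2 * alt_square_sum p N)
      \<longlonglongrightarrow> 2 * ((\<Sum>k. (-1) ^ k / odd_real k ^ p * binom_weight_sum k) / 16)"
    by (intro tendsto_intros alt_square_sum_tendsto \<open>p > 0\<close>)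
  moreover have "(\<lambda>N. 2 * alt_square_sum p N)
      \<longlonglongrightarrow> (\<Sum>r<p. (-1) ^ r * (dirichlet_beta (p - r) * dirichlet_beta (r + 1)))"
    unfolding alt_square_sum_symmetrize[OF assms] by (intro tendsto_intros partial_beta) auto
  ultimately show ?thesis
    using LIMSEQ_unique by fastforce
qed

theorem cbw_t_star_sum_sums:
  "(\<lambda>n. cbw (n + 1) * t_star_sum j (n + 1))
    sums (8 * (\<Sum>r<2 * j + 1. (-1) ^ r * (dirichlet_beta (2 * j + 1 - r) * dirichlet_beta (r + 1))))"
  using cbw_mult_t_star_sum_sums[of j] suminf_binom_weight_sum_eq_dirichlet_beta[of "2 * j + 1"]
  by simp

theorem mainTheorem2:
  shows "((\<lambda>n. cbw (n + 1)) sums (8 * dirichlet_beta 1 ^ 2)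
      \<and> 8 * dirichlet_beta 1 ^ 2 = pi ^ 2 / 2)
    \<and> ((\<lambda>n. cbw (n + 1) * odd_harm 2 (n + 1))
           sums (16 * dirichlet_beta 1 * dirichlet_beta 3 - 8 * dirichlet_beta 2 ^ 2)
      \<and> 16 * dirichlet_beta 1 * dirichlet_beta 3 - 8 * dirichlet_beta 2 ^ 2
          = pi ^ 4 / 8 - 8 * dirichlet_beta 2 ^ 2)
    \<and> ((\<lambda>n. cbw (n + 1) * ((odd_harm 2 (n + 1) ^ 2 + odd_harm 4 (n + 1)) / 2))
           sums (16 * dirichlet_beta 1 * dirichlet_beta 5 - 16 * dirichlet_beta 2 * dirichlet_beta 4
                 + 8 * dirichlet_beta 3 ^ 2)
      \<and> 16 * dirichlet_beta 1 * dirichlet_beta 5 - 16 * dirichlet_beta 2 * dirichlet_beta 4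
                 + 8 * dirichlet_beta 3 ^ 2
          = pi ^ 6 / 48 - 16 * dirichlet_beta 2 * dirichlet_beta 4)
    \<and> ((\<lambda>n. cbw (n + 1) * ((odd_harm 2 (n + 1) ^ 3 + 3 * odd_harm 2 (n + 1) * odd_harm 4 (n + 1)
                              + 2 * odd_harm 6 (n + 1)) / 6))
           sums (16 * dirichlet_beta 1 * dirichlet_beta 7 - 16 * dirichlet_beta 2 * dirichlet_beta 6
                 + 16 * dirichlet_beta 3 * dirichlet_beta 5 - 8 * dirichlet_beta 4 ^ 2)
      \<and> 16 * dirichlet_beta 1 * dirichlet_beta 7 - 16 * dirichlet_beta 2 * dirichlet_beta 6
                 + 16 * dirichlet_beta 3 * dirichlet_beta 5 - 8 * dirichlet_beta 4 ^ 2
          = 17 * pi ^ 8 / 5760 - 16 * dirichlet_beta 2 * dirichlet_beta 6 - 8 * dirichlet_beta 4 ^ 2)"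
proof -
  have "(\<lambda>n. cbw (n + 1)) sums (8 * dirichlet_beta 1 ^ 2)"
    using cbw_t_star_sum_sums[of 0] by (simp add: power2_eq_square)
  moreover have "(\<lambda>n. cbw (n + 1) * odd_harm 2 (n + 1))
      sums (16 * dirichlet_beta 1 * dirichlet_beta 3 - 8 * dirichlet_beta 2 ^ 2)"
    using cbw_t_star_sum_sums[of 1, unfolded t_star_sum_1]
    by (simp add: eval_nat_numeral power2_eq_square algebra_simps)
  moreover have "(\<lambda>n. cbw (n + 1) * ((odd_harm 2 (n + 1) ^ 2 + odd_harm 4 (n + 1)) / 2))
      sums (16 * dirichlet_beta 1 * dirichlet_beta 5 - 16 * dirichlet_beta 2 * dirichlet_beta 4
            + 8 * dirichlet_beta 3 ^ 2)"
    using cbw_t_star_sum_sums[of 2, unfolded t_star_sum_2]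
    by (simp add: eval_nat_numeral power2_eq_square algebra_simps)
  moreover have "(\<lambda>n. cbw (n + 1) * ((odd_harm 2 (n + 1) ^ 3 + 3 * odd_harm 2 (n + 1) * odd_harm 4 (n + 1)
                              + 2 * odd_harm 6 (n + 1)) / 6))
      sums (16 * dirichlet_beta 1 * dirichlet_beta 7 - 16 * dirichlet_beta 2 * dirichlet_beta 6
            + 16 * dirichlet_beta 3 * dirichlet_beta 5 - 8 * dirichlet_beta 4 ^ 2)"
    using cbw_t_star_sum_sums[of 3, unfolded t_star_sum_3]
    by (simp add: eval_nat_numeral power2_eq_square algebra_simps)
  moreover have "8 * dirichlet_beta 1 ^ 2 = pi ^ 2 / 2"
    "16 * dirichlet_beta 1 * dirichlet_beta 3 = pi ^ 4 / 8"
    "16 * dirichlet_beta 1 * dirichlet_beta 5 + 8 * dirichlet_beta 3 ^ 2 = pi ^ 6 / 48"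
    "16 * dirichlet_beta 1 * dirichlet_beta 7 + 16 * dirichlet_beta 3 * dirichlet_beta 5 = 17 * pi ^ 8 / 5760"
    unfolding dirichlet_beta_1 dirichlet_beta_3 dirichlet_beta_5 dirichlet_beta_7
    by (simp_all add: field_simps eval_nat_numeral)
  ultimately show ?thesis
    by (intro conjI) (assumption | linarith)+
qed

end
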